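(* Let $\mathcal{G}$ be a finite connected undirected simple graph with vertices $1,\dots,N$, let $p$ be a prime and $0\le\iota\le\kappa$ integers. If $h\in\mathcal{H}(\mathcal{G},p^\kappa)$ satisfies $p^\iota h(i)\equiv0\pmod{p^\kappa}$ for all $i$, then there exists $h'\in\mathcal{H}(\mathcal{G},p^\iota)$ with $h(i)\equiv p^{\kappa-\iota}h'(i)\pmod{p^\kappa}$ for all $i$.
   Context: The Laplacian $\nabla^2$ is the $N\times N$ integer matrix with $\nabla^2_{ii}=d_i$ (degree of $i$), $\nabla^2_{ij}=-1$ if $i,j$ adjacent, $0$ otherwise. $\mathbf{Z}_M=\{0,\dots,M-1\}$. $\mathcal{H}(\mathcal{G},M)$ denotes the set of functions $h:\{1,\dots,N\}\to\mathbf{Z}_M$ with $(\nabla^2h)(i)\equiv0\pmod M$ for all $i$. *)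

theory Defs
  imports Main "HOL-Number_Theory.Cong"
begin

definition simple_graph :: "nat \<Rightarrow> (nat \<Rightarrow> nat \<Rightarrow> bool) \<Rightarrow> bool" where
  "simple_graph N E \<longleftrightarrow>
     (\<forall>i j. E i j \<longrightarrow> i \<in> {1..N} \<and> j \<in> {1..N}) \<and>
     (\<forall>i j. E i j \<longrightarrow> E j i) \<and> (\<forall>i. \<not> E i i)"

definition connected_graph :: "nat \<Rightarrow> (nat \<Rightarrow> nat \<Rightarrow> bool) \<Rightarrow> bool" where
  "connected_graph N E \<longleftrightarrow> N \<ge> 1 \<and> (\<forall>i\<in>{1..N}. \<forall>j\<in>{1..N}. E\<^sup>*\<^sup>* i j)"

definition degree :: "nat \<Rightarrow> (nat \<Rightarrow> nat \<Rightarrow> bool) \<Rightarrow> nat \<Rightarrow> nat" where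
  "degree N E i = card {j \<in> {1..N}. E i j}"

definition laplacian :: "nat \<Rightarrow> (nat \<Rightarrow> nat \<Rightarrow> bool) \<Rightarrow> (nat \<Rightarrow> int) \<Rightarrow> nat \<Rightarrow> int" where
  "laplacian N E h i = (\<Sum>j\<in>{1..N}.
      (if j = i then int (degree N E i) else if E i j then -1 else 0) * h j)"

text \<open>H(G,M): functions {1..N} \<rightarrow> Z_M (represented as int-valued, values in {0..M-1},
  zero outside 1..N) with Laplacian vanishing mod M.\<close>
definition harmonic_mod :: "nat \<Rightarrow> (nat \<Rightarrow> nat \<Rightarrow> bool) \<Rightarrow> int \<Rightarrow> (nat \<Rightarrow> int) set" where
  "harmonic_mod N E M = {h. (\<forall>i\<in>{1..N}. h i \<in> {0..M-1}) \<and> (\<forall>i. i \<notin> {1..N} \<longrightarrow> h i = 0) \<and>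
      (\<forall>i\<in>{1..N}. [laplacian N E h i = 0] (mod M))}"

end

theory Submission
  imports Defs
begin

(* The hypothesis p^\<iota> h \<equiv> 0 (mod p^\<kappa>) says exactly that p^(\<kappa>-\<iota>) divides every
   value of h, and the Laplacian is linear, so h' = h / p^(\<kappa>-\<iota>) is harmonic modulo
   p^\<iota>. *)

lemma laplacian_scale:
  "laplacian N E (\<lambda>j. c * g j) i = c * laplacian N E g i"
  unfolding laplacian_def sum_distrib_left by (simp add: algebra_simps)

lemma harmonic_mod_div:
  fixes m n :: int
  assumes "n > 0" and "\<forall>i. n dvd h i" and "h \<in> harmonic_mod N E (m * n)"
  shows "(\<lambda>i. h i div n) \<in> harmonic_mod N E m"
proof -
  define h' where "h' i = h i div n" for i
  have h_eq: "h = (\<lambda>i. n * h' i)"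
    using assms(2) unfolding h'_def by auto
  have "h' i \<in> {0..m - 1}" if "i \<in> {1..N}" for i
  proof -
    have "0 \<le> n * h' i" and "n * h' i < n * m"
      using assms(3) that unfolding harmonic_mod_def h_eq by (auto simp: mult.commute)
    then show ?thesis
      using assms(1) by (simp add: zero_le_mult_iff)
  qed
  moreover have "[laplacian N E h' i = 0] (mod m)" if "i \<in> {1..N}" for i
  proof -
    have "[laplacian N E h i = 0] (mod m * n)"
      using assms(3) that unfolding harmonic_mod_def by blast
    then have "m * n dvd n * laplacian N E h' i"
      unfolding h_eq laplacian_scale cong_0_iff .
    then show ?thesis
      using assms(1) by (simp add: cong_0_iff mult.commute)
  qed
  moreover have "h' i = 0" if "i \<notin> {1..N}" for i
    using assms(3) that unfolding harmonic_mod_def h'_def by simp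
  ultimately show ?thesis
    unfolding harmonic_mod_def h'_def by blast
qed

theorem lemma2:
  fixes N :: nat and E :: "nat \<Rightarrow> nat \<Rightarrow> bool" and p :: int and \<iota> \<kappa> :: nat
    and h :: "nat \<Rightarrow> int"
  assumes "simple_graph N E" and "connected_graph N E"
    and "prime p" and "\<iota> \<le> \<kappa>"
    and "h \<in> harmonic_mod N E (p ^ \<kappa>)"
    and "\<forall>i\<in>{1..N}. [p ^ \<iota> * h i = 0] (mod p ^ \<kappa>)"
  shows "\<exists>h' \<in> harmonic_mod N E (p ^ \<iota>).
           \<forall>i\<in>{1..N}. [h i = p ^ (\<kappa> - \<iota>) * h' i] (mod p ^ \<kappa>)"
proof -
  define q where "q = p ^ (\<kappa> - \<iota>)"
  have p_pos: "p > 0"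
    using assms(3) prime_gt_0_int by blast
  have pk_split: "p ^ \<kappa> = p ^ \<iota> * q"
    unfolding q_def using assms(4) by (simp flip: power_add)
  have q_dvd: "q dvd h i" for i
  proof (cases "i \<in> {1..N}")
    case True
    then have "[p ^ \<iota> * h i = 0] (mod p ^ \<kappa>)"
      using assms(6) by blast
    then have "p ^ \<iota> * q dvd p ^ \<iota> * h i"
      unfolding pk_split cong_0_iff .
    then show ?thesis
      using p_pos by auto
  next
    case False
    then show ?thesis
      using assms(5) unfolding harmonic_mod_def by simp
  qed
  have "(\<lambda>i. h i div q) \<in> harmonic_mod N E (p ^ \<iota>)"
    using harmonic_mod_div[of q h] q_dvd assms(5) p_pos pk_split
    unfolding q_def by simp
  moreover have "h i = q * (h i div q)" for i
    using q_dvd by simp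
  ultimately show ?thesis
    unfolding q_def by (metis cong_refl)
qed

end
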